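(* Let $\pi$ be a coupling of $\alpha$ and $\beta$ with density $p=\frac{d\pi}{d(\alpha\otimes\beta)}$ satisfying $\|p\|_\infty\le b$, and let $(x_i,y_i)_{i=1}^n$ be i.i.d. from a coupling $\hat\pi$ of $\alpha$ and $\beta$. Then $$\mathbb E\Big[\frac1n\sum_{j=1}^n\Big(1-\frac1n\sum_{i=1}^np(x_i,y_j)\Big)^2\Big]\le\frac{(b+1)^2}{n},$$ and for every $t>0$, with probability at least $1-\exp(-t^2/(4b^2))$, $$\frac1n\sum_{j=1}^n\Big(1-\frac1n\sum_{i=1}^np(x_i,y_j)\Big)^2\le\frac{(t+b+1)^2}{n}.$$
   Context: $\alpha,\beta$ are probability measures on measurable spaces $\mathcal X,\mathcal Y$; a coupling of $\alpha,\beta$ is a probability measure on $\mathcal X\times\mathcal Y$ with marginals $\alpha$ and $\beta$. *)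

theory Defs
  imports "HOL-Probability.Probability"
begin

definition coupling :: "'a measure \<Rightarrow> 'b measure \<Rightarrow> ('a \<times> 'b) measure \<Rightarrow> bool" where
  "coupling \<alpha> \<beta> \<pi> \<longleftrightarrow> prob_space \<pi> \<and> sets \<pi> = sets (\<alpha> \<Otimes>\<^sub>M \<beta>)
     \<and> distr \<pi> \<alpha> fst = \<alpha> \<and> distr \<pi> \<beta> snd = \<beta>"

definition marg_stat :: "('a \<Rightarrow> 'b \<Rightarrow> real) \<Rightarrow> nat \<Rightarrow> (nat \<Rightarrow> 'a \<times> 'b) \<Rightarrow> real" where
  "marg_stat p n \<omega> = (1 / real n) * (\<Sum>j<n. (1 - (1 / real n) * (\<Sum>i<n. p (fst (\<omega> i)) (snd (\<omega> j))))\<^sup>2)"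

end

theory Submission
  imports Defs
begin

(* Let V_j = n^(-1/2) * sum_i (1 - p(x_i, y_j)), so that n times the statistic is the mean of
   the V_j^2. Given the j-th sample point, the summands with i ~= j are independent, bounded, and
   centred because p(-, y) is an alpha-density for beta-almost every y (this is where the coupling
   pi with density p enters). Hoeffding's lemma then gives E cosh(theta V_j) <= exp(theta^2 b^2 / 2),
   the diagonal summand being absorbed by |1 - p| <= b. As y |-> cosh(theta sqrt y) is convex,
   Jensen's inequality passes this bound to Y = sqrt(n * statistic). The bound on the mean follows
   from cosh u >= 1 + u^2/2; the tail bound from Markov's inequality for small t and a Chernoff
   bound for large t. *)

lemma two_power_mult_fact_le_fact_double: "2 ^ k * fact k \<le> (fact (2 * k) :: real)"
proof (induction k)
  case (Suc k)
  have "(2::real) ^ Suc k * fact (Suc k) = (2 * real k + 2) * (2 ^ k * fact k)"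
    by (simp add: algebra_simps)
  also have "\<dots> \<le> (2 * real k + 2) * fact (2 * k)"
    using Suc.IH by (intro mult_left_mono) auto
  also have "\<dots> \<le> (2 * real k + 2) * ((2 * real k + 1) * fact (2 * k))"
    by (intro mult_left_mono mult_right_mono) auto
  also have "\<dots> = fact (2 * Suc k)"
    by (simp add: algebra_simps)
  finally show ?case .
qed simp

lemma exp_sums: "(\<lambda>k. x ^ k / fact k) sums exp (x :: real)"
  using exp_converges[of x] by (simp add: divide_inverse_commute)

lemma cosh_sums_even: "(\<lambda>k. x ^ (2 * k) / fact (2 * k)) sums cosh (x :: real)"
proof -
  define f where "f n = (if even n then x ^ n / fact n else 0)" for n
  have "(\<lambda>n. if even n then x ^ n /\<^sub>R fact n else 0) = f"
    by (auto simp: fun_eq_iff f_def divide_inverse_commute)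
  then have "f sums cosh x"
    using cosh_converges[of x] by simp
  moreover have "strict_mono (\<lambda>k::nat. 2 * k)"
    by (simp add: strict_mono_def)
  moreover have "f n = 0" if "n \<notin> range (\<lambda>k. 2 * k)" for n
    using that by (auto simp: f_def elim!: evenE)
  ultimately have "(\<lambda>k. f (2 * k)) sums cosh x"
    using sums_mono_reindex[of "\<lambda>k. 2 * k" f] by blast
  then show ?thesis
    by (simp add: f_def)
qed

lemma cosh_le_exp_half_square: "cosh x \<le> exp (x\<^sup>2 / 2 :: real)"
proof (rule sums_le[OF _ cosh_sums_even exp_sums])
  fix k
  have "x ^ (2 * k) / fact (2 * k) \<le> x ^ (2 * k) / (2 ^ k * fact k)"
    by (intro divide_left_mono two_power_mult_fact_le_fact_double) (auto simp: zero_le_even_power)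
  then show "x ^ (2 * k) / fact (2 * k) \<le> (x\<^sup>2 / 2) ^ k / fact k"
    by (simp add: power_mult power_divide)
qed

lemma one_plus_half_square_le_cosh: "1 + x\<^sup>2 / 2 \<le> cosh (x :: real)"
proof -
  have "(\<Sum>k<2. x ^ (2 * k) / fact (2 * k)) \<le> (\<Sum>k. x ^ (2 * k) / fact (2 * k))"
    using cosh_sums_even[of x] by (intro sum_le_suminf) (auto simp: sums_iff zero_le_even_power)
  then show ?thesis
    using cosh_sums_even[of x] by (simp add: numeral_2_eq_2 sums_iff)
qed

lemma convex_on_cosh_sqrt: "convex_on {0..} (\<lambda>y. cosh (\<theta> * sqrt y))"
proof (rule convex_onI)
  fix u y z :: real
  assume u: "0 < u" "u < 1" and yz: "y \<in> {0..}" "z \<in> {0..}"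
  have series: "(\<lambda>k. \<theta> ^ (2 * k) * w ^ k / fact (2 * k)) sums cosh (\<theta> * sqrt w)" if "0 \<le> w" for w
    using cosh_sums_even[of "\<theta> * sqrt w"] that by (simp add: power_mult_distrib power_mult)
  have power_convex: "((1 - u) * y + u * z) ^ k \<le> (1 - u) * y ^ k + u * z ^ k" for k
  proof -
    have "convex_on {0..} (\<lambda>w::real. w ^ k)"
      by (cases "even k") (auto intro: convex_on_subset[OF convex_power_even] convex_power_odd)
    then show ?thesis
      using convex_onD[of "{0..}" "\<lambda>w::real. w ^ k" u y z] u yz by simp
  qed
  show "cosh (\<theta> * sqrt ((1 - u) *\<^sub>R y + u *\<^sub>R z)) \<le> (1 - u) * cosh (\<theta> * sqrt y) + u * cosh (\<theta> * sqrt z)"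
  proof (rule sums_le[OF _ series sums_add[OF sums_mult[OF series] sums_mult[OF series]]])
    fix k
    have "\<theta> ^ (2 * k) * ((1 - u) * y + u * z) ^ k \<le> \<theta> ^ (2 * k) * ((1 - u) * y ^ k + u * z ^ k)"
      by (intro mult_left_mono power_convex) (auto simp: zero_le_even_power)
    then show "\<theta> ^ (2 * k) * ((1 - u) *\<^sub>R y + u *\<^sub>R z) ^ k / fact (2 * k)
        \<le> (1 - u) * (\<theta> ^ (2 * k) * y ^ k / fact (2 * k)) + u * (\<theta> ^ (2 * k) * z ^ k / fact (2 * k))"
      by (simp add: divide_right_mono add_divide_distrib[symmetric] algebra_simps)
  qed (use u yz in auto)
qed simp

lemma exp_le_inverse_one_minus: "x < 1 \<Longrightarrow> exp x \<le> 1 / (1 - x :: real)"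
  using exp_ge_add_one_self[of "- x"] by (simp add: exp_minus field_simps)

lemma exp_square_le_one_plus_square:
  assumes "0 \<le> r" "r \<le> 1 / 2"
  shows "exp (r\<^sup>2) \<le> (1 + r :: real)\<^sup>2"
proof -
  have r2: "r * r \<le> 1 / 4"
    using mult_mono[OF assms(2) assms(2)] assms by simp
  then have "r * (r * r) \<le> 1 / 8"
    using mult_mono[OF assms(2) r2] assms by simp
  then have "0 \<le> r * (2 - 2 * (r * r) - r * (r * r))"
    using r2 assms by (intro mult_nonneg_nonneg) auto
  then have "1 \<le> (1 + r)\<^sup>2 * (1 - r\<^sup>2)"
    by (simp add: power2_eq_square algebra_simps)
  moreover have "r\<^sup>2 < 1"
    using r2 by (simp add: power2_eq_square)
  ultimately have "1 / (1 - r\<^sup>2) \<le> (1 + r)\<^sup>2"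
    by (simp add: divide_le_eq)
  with exp_le_inverse_one_minus[OF \<open>r\<^sup>2 < 1\<close>] show ?thesis
    by linarith
qed

lemma cosh_abs_mono: "\<bar>x\<bar> \<le> \<bar>y\<bar> \<Longrightarrow> cosh x \<le> cosh (y :: real)"
  using cosh_real_nonneg_le_iff[of "\<bar>x\<bar>" "\<bar>y\<bar>"] by simp

lemma borel_measurable_cosh [measurable (raw)]:
  "f \<in> borel_measurable M \<Longrightarrow> (\<lambda>x. cosh (f x :: real)) \<in> borel_measurable M"
  by (simp add: cosh_def)

lemma ennreal_two_cosh: "ennreal (2 * cosh x) = ennreal (exp x) + ennreal (exp (- x :: real))"
proof -
  have "2 * cosh x = exp x + exp (- x)"
    by (simp add: cosh_field_def)
  then show ?thesis
    by (simp add: ennreal_plus)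
qed

lemma exp_half_mult_exp_eighth_power_le:
  fixes x :: real
  assumes "n > 0" "x \<ge> 0"
  shows "exp (x / (2 * real n)) * exp (x / (8 * real n)) ^ (n - 1) \<le> exp (x / 2)"
proof -
  have "x / (2 * real n) + real (n - 1) * (x / (8 * real n)) = x * ((real n + 3) / (8 * real n))"
    using assms by (simp add: of_nat_diff field_simps)
  also have "\<dots> \<le> x * (1 / 2)"
    using assms by (intro mult_left_mono) (auto simp: field_simps)
  finally show ?thesis
    by (simp add: exp_of_nat_mult[symmetric] exp_add[symmetric])
qed

lemma two_exp_neg_square_le:
  fixes \<sigma> t :: real
  assumes "\<sigma> \<ge> 1" "(\<sigma> + 1) / 2 < t"
  shows "2 * exp (- (t + \<sigma> + 1)\<^sup>2 / (2 * \<sigma>\<^sup>2)) \<le> exp (- t\<^sup>2 / (4 * \<sigma>\<^sup>2))"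
proof -
  define z where "z = t + \<sigma> + 1"
  have "(\<sigma> + 1) * (\<sigma> + 1) \<le> (2 * t) * (\<sigma> + 1)"
    using assms by (intro mult_right_mono) auto
  then have "4 * \<sigma>\<^sup>2 \<le> 2 * z\<^sup>2 - t\<^sup>2"
    using assms by (simp add: z_def power2_eq_square algebra_simps) (use zero_le_square[of t] in linarith)
  then have "(4 * \<sigma>\<^sup>2 - 2 * z\<^sup>2) / (4 * \<sigma>\<^sup>2) \<le> - t\<^sup>2 / (4 * \<sigma>\<^sup>2)"
    by (intro divide_right_mono) auto
  moreover have "1 - z\<^sup>2 / (2 * \<sigma>\<^sup>2) = (4 * \<sigma>\<^sup>2 - 2 * z\<^sup>2) / (4 * \<sigma>\<^sup>2)"
    using assms by (simp add: field_simps)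
  moreover have "2 * exp (- z\<^sup>2 / (2 * \<sigma>\<^sup>2)) \<le> exp 1 * exp (- z\<^sup>2 / (2 * \<sigma>\<^sup>2))"
    using exp_ge_add_one_self[of 1] by (intro mult_right_mono) auto
  ultimately show ?thesis
    by (simp add: z_def exp_add[symmetric] order_trans)
qed

context interval_bounded_random_variable
begin

lemma Hoeffdings_lemma_nn_integral_0_any_sign:
  assumes "expectation f = 0"
  shows "(\<integral>\<^sup>+x. exp (l * f x) \<partial>M) \<le> ennreal (exp (l\<^sup>2 * (b - a)\<^sup>2 / 8))"
proof -
  consider "l > 0" | "l < 0" | "l = 0"
    by linarith
  then show ?thesis
  proof cases
    case 2
    interpret reflected: interval_bounded_random_variable M "\<lambda>x. - f x" "- b" "- a"
      by unfold_locales (auto intro: eventually_mono[OF AE_in_interval])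
    have "(\<integral>\<^sup>+x. exp ((- l) * (- f x)) \<partial>M) \<le> ennreal (exp ((- l)\<^sup>2 * (- a - - b)\<^sup>2 / 8))"
      using 2 assms by (intro reflected.Hoeffdings_lemma_nn_integral_0) auto
    then show ?thesis
      by (simp add: algebra_simps)
  qed (use assms Hoeffdings_lemma_nn_integral_0 emeasure_space_1 in auto)
qed

end

context prob_space
begin

lemma integrable_square_of_cosh_bound:
  fixes Y :: "'a \<Rightarrow> real"
  assumes [measurable]: "Y \<in> borel_measurable M" and "integrable M (\<lambda>\<omega>. cosh (Y \<omega>))"
  shows "integrable M (\<lambda>\<omega>. (Y \<omega>)\<^sup>2)"
proof (rule Bochner_Integration.integrable_bound)
  show "integrable M (\<lambda>\<omega>. 2 * cosh (Y \<omega>))"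
    using assms(2) by simp
  show "AE \<omega> in M. norm ((Y \<omega>)\<^sup>2) \<le> norm (2 * cosh (Y \<omega>))"
  proof (intro AE_I2)
    fix \<omega>
    show "norm ((Y \<omega>)\<^sup>2) \<le> norm (2 * cosh (Y \<omega>))"
      using one_plus_half_square_le_cosh[of "Y \<omega>"] by simp
  qed
qed simp

lemma integral_square_le_of_cosh_bound:
  fixes Y :: "'a \<Rightarrow> real" and \<sigma> :: real
  assumes [measurable]: "Y \<in> borel_measurable M" and "\<sigma> > 0"
    and integrable_cosh: "\<And>\<theta>. integrable M (\<lambda>\<omega>. cosh (\<theta> * Y \<omega>))"
    and cosh_bound: "\<And>\<theta>. (\<integral>\<omega>. cosh (\<theta> * Y \<omega>) \<partial>M) \<le> exp (\<theta>\<^sup>2 * \<sigma>\<^sup>2 / 2)"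
  shows "(\<integral>\<omega>. (Y \<omega>)\<^sup>2 \<partial>M) \<le> \<sigma> * (\<sigma> + 1)"
proof -
  define x where "x = 1 / (\<sigma> + 1)"
  define \<theta> where "\<theta> = sqrt (2 * x) / \<sigma>"
  have x: "0 < x" "x < 1"
    using \<open>\<sigma> > 0\<close> by (auto simp: x_def)
  have \<theta>2: "\<theta>\<^sup>2 = 2 * x / \<sigma>\<^sup>2"
    using x by (simp add: \<theta>_def power_divide)
  then have "\<theta>\<^sup>2 > 0"
    using x \<open>\<sigma> > 0\<close> by simp
  have "(Y \<omega>)\<^sup>2 \<le> 2 * (cosh (\<theta> * Y \<omega>) - 1) / \<theta>\<^sup>2" for \<omega>
    using one_plus_half_square_le_cosh[of "\<theta> * Y \<omega>"] \<open>\<theta>\<^sup>2 > 0\<close>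
    by (simp add: le_divide_eq power_mult_distrib algebra_simps)
  then have "(\<integral>\<omega>. (Y \<omega>)\<^sup>2 \<partial>M) \<le> (\<integral>\<omega>. 2 * (cosh (\<theta> * Y \<omega>) - 1) / \<theta>\<^sup>2 \<partial>M)"
    using integrable_cosh[of \<theta>] integrable_cosh[of 1]
    by (intro integral_mono integrable_square_of_cosh_bound) auto
  also have "\<dots> = 2 * ((\<integral>\<omega>. cosh (\<theta> * Y \<omega>) \<partial>M) - 1) / \<theta>\<^sup>2"
    using integrable_cosh[of \<theta>] by (simp add: prob_space)
  also have "\<dots> \<le> 2 * (exp x - 1) / \<theta>\<^sup>2"
    using cosh_bound[of \<theta>] \<open>\<theta>\<^sup>2 > 0\<close> \<open>\<sigma> > 0\<close> by (intro divide_right_mono) (auto simp: \<theta>2)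
  also have "\<dots> \<le> 2 * (x / (1 - x)) / \<theta>\<^sup>2"
    using exp_le_inverse_one_minus[of x] x \<open>\<theta>\<^sup>2 > 0\<close>
    by (intro divide_right_mono mult_left_mono) (auto simp: field_simps)
  also have "\<dots> = \<sigma>\<^sup>2 / (1 - x)"
    using x \<open>\<sigma> > 0\<close> by (simp add: \<theta>2 field_simps)
  also have "\<dots> = \<sigma> * (\<sigma> + 1)"
    using \<open>\<sigma> > 0\<close> by (simp add: x_def field_simps power2_eq_square)
  finally show ?thesis .
qed

lemma prob_square_ge_le_of_cosh_bound_Chernoff:
  fixes Y :: "'a \<Rightarrow> real" and \<sigma> z :: real
  assumes [measurable]: "Y \<in> borel_measurable M" and "\<sigma> > 0" and "z > 0"
    and integrable_cosh: "\<And>\<theta>. integrable M (\<lambda>\<omega>. cosh (\<theta> * Y \<omega>))"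
    and cosh_bound: "\<And>\<theta>. (\<integral>\<omega>. cosh (\<theta> * Y \<omega>) \<partial>M) \<le> exp (\<theta>\<^sup>2 * \<sigma>\<^sup>2 / 2)"
  shows "measure M {\<omega> \<in> space M. z\<^sup>2 \<le> (Y \<omega>)\<^sup>2} \<le> 2 * exp (- z\<^sup>2 / (2 * \<sigma>\<^sup>2))"
proof -
  define \<theta> where "\<theta> = z / \<sigma>\<^sup>2"
  have "\<theta> > 0"
    using assms by (simp add: \<theta>_def)
  have "{\<omega> \<in> space M. z\<^sup>2 \<le> (Y \<omega>)\<^sup>2} \<subseteq> {\<omega> \<in> space M. cosh (\<theta> * z) \<le> cosh (\<theta> * Y \<omega>)}"
    using \<open>z > 0\<close> \<open>\<theta> > 0\<close>
    by (auto intro!: cosh_abs_mono mult_left_mono simp: abs_mult) (metis abs_le_square_iff abs_of_pos)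
  then have "measure M {\<omega> \<in> space M. z\<^sup>2 \<le> (Y \<omega>)\<^sup>2}
      \<le> measure M {\<omega> \<in> space M. cosh (\<theta> * z) \<le> cosh (\<theta> * Y \<omega>)}"
    by (intro finite_measure_mono) measurable
  also have "\<dots> \<le> (\<integral>\<omega>. cosh (\<theta> * Y \<omega>) \<partial>M) / cosh (\<theta> * z)"
    using integrable_cosh by (intro integral_Markov_inequality_measure[where A = "space M"]) auto
  also have "\<dots> \<le> exp (\<theta>\<^sup>2 * \<sigma>\<^sup>2 / 2) / (exp (\<theta> * z) / 2)"
    using cosh_bound[of \<theta>] by (intro frac_le) (auto simp: cosh_field_def)
  also have "\<dots> = 2 * exp (\<theta>\<^sup>2 * \<sigma>\<^sup>2 / 2 - \<theta> * z)"
    by (simp add: exp_diff)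
  also have "\<theta>\<^sup>2 * \<sigma>\<^sup>2 / 2 - \<theta> * z = - z\<^sup>2 / (2 * \<sigma>\<^sup>2)"
    using assms by (simp add: \<theta>_def field_simps power2_eq_square)
  finally show ?thesis .
qed

lemma prob_square_ge_le_of_cosh_bound:
  fixes Y :: "'a \<Rightarrow> real" and \<sigma> t :: real
  assumes [measurable]: "Y \<in> borel_measurable M" and "\<sigma> \<ge> 1" and "t > 0"
    and integrable_cosh: "\<And>\<theta>. integrable M (\<lambda>\<omega>. cosh (\<theta> * Y \<omega>))"
    and cosh_bound: "\<And>\<theta>. (\<integral>\<omega>. cosh (\<theta> * Y \<omega>) \<partial>M) \<le> exp (\<theta>\<^sup>2 * \<sigma>\<^sup>2 / 2)"
  shows "measure M {\<omega> \<in> space M. (t + \<sigma> + 1)\<^sup>2 \<le> (Y \<omega>)\<^sup>2} \<le> exp (- t\<^sup>2 / (4 * \<sigma>\<^sup>2))"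
proof (cases "t \<le> (\<sigma> + 1) / 2")
  case True
  define r where "r = t / (\<sigma> + 1)"
  have r: "0 \<le> r" "r \<le> 1 / 2" "t / (2 * \<sigma>) \<le> r"
    using True assms by (auto simp: r_def field_simps)
  have "measure M {\<omega> \<in> space M. (t + \<sigma> + 1)\<^sup>2 \<le> (Y \<omega>)\<^sup>2} \<le> (\<integral>\<omega>. (Y \<omega>)\<^sup>2 \<partial>M) / (t + \<sigma> + 1)\<^sup>2"
    using integrable_square_of_cosh_bound[of Y] integrable_cosh[of 1] assms
    by (intro integral_Markov_inequality_measure[where A = "space M"]) auto
  also have "\<dots> \<le> (\<sigma> + 1)\<^sup>2 / (t + \<sigma> + 1)\<^sup>2"
    using integral_square_le_of_cosh_bound[of Y \<sigma>] assms
    by (intro divide_right_mono) (auto simp: power2_eq_square intro: order_trans)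
  also have "\<dots> = 1 / (1 + r)\<^sup>2"
    using assms by (simp add: r_def field_simps)
  also have "\<dots> \<le> exp (- r\<^sup>2)"
    using exp_square_le_one_plus_square[OF r(1,2)] r(1) by (simp add: exp_minus divide_simps)
  also have "\<dots> \<le> exp (- t\<^sup>2 / (4 * \<sigma>\<^sup>2))"
    using power_mono[OF r(3), of 2] assms by (simp add: power_divide power_mult_distrib)
  finally show ?thesis .
next
  case False
  have "measure M {\<omega> \<in> space M. (t + \<sigma> + 1)\<^sup>2 \<le> (Y \<omega>)\<^sup>2} \<le> 2 * exp (- (t + \<sigma> + 1)\<^sup>2 / (2 * \<sigma>\<^sup>2))"
    using assms by (intro prob_square_ge_le_of_cosh_bound_Chernoff) auto
  also have "\<dots> \<le> exp (- t\<^sup>2 / (4 * \<sigma>\<^sup>2))"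
    using False assms by (intro two_exp_neg_square_le) auto
  finally show ?thesis .
qed

end

(* Given the j-th coordinate, the other factors are independent. *)
lemma nn_integral_PiM_prod_diagonal_le:
  fixes g :: "'c \<Rightarrow> 'c \<Rightarrow> ennreal"
  assumes "sigma_finite_measure M" and I: "finite I" "j \<in> I"
    and [measurable]: "(\<lambda>(x, y). g x y) \<in> borel_measurable (M \<Otimes>\<^sub>M M)"
    and bound: "AE y in M. (\<integral>\<^sup>+x. g x y \<partial>M) \<le> K"
  shows "(\<integral>\<^sup>+\<omega>. (\<Prod>i\<in>I. g (\<omega> i) (\<omega> j)) \<partial>PiM I (\<lambda>_. M)) \<le> (\<integral>\<^sup>+y. g y y \<partial>M) * K ^ (card I - 1)"
proof -
  interpret product_sigma_finite "\<lambda>_. M"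
    using assms(1) by (simp add: product_sigma_finite_def)
  define J where "J = I - {j}"
  have J: "finite J" "j \<notin> J" "I = insert j J" "card J = card I - 1"
    using I by (auto simp: J_def)
  have g_section: "(\<lambda>x. g x y) \<in> borel_measurable M" if "y \<in> space M" for y
    using measurable_compose[OF measurable_Pair2'[OF that] assms(4)] by simp
  have "(\<integral>\<^sup>+\<omega>. (\<Prod>i\<in>I. g (\<omega> i) (\<omega> j)) \<partial>PiM I (\<lambda>_. M))
      = (\<integral>\<^sup>+y. (\<integral>\<^sup>+x. (\<Prod>i\<in>insert j J. g ((x(j := y)) i) ((x(j := y)) j)) \<partial>PiM J (\<lambda>_. M)) \<partial>M)"
    unfolding J(3) by (rule product_nn_integral_insert_rev) (use J in auto)
  also have "\<dots> = (\<integral>\<^sup>+y. g y y * (\<integral>\<^sup>+x. g x y \<partial>M) ^ card J \<partial>M)"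
  proof (rule nn_integral_cong)
    fix y assume y: "y \<in> space M"
    have "(\<integral>\<^sup>+x. (\<Prod>i\<in>insert j J. g ((x(j := y)) i) ((x(j := y)) j)) \<partial>PiM J (\<lambda>_. M))
        = (\<integral>\<^sup>+\<omega>. g y y * (\<Prod>i\<in>J. g (\<omega> i) y) \<partial>PiM J (\<lambda>_. M))"
    proof (rule nn_integral_cong)
      fix x
      have "(\<Prod>i\<in>J. g ((x(j := y)) i) y) = (\<Prod>i\<in>J. g (x i) y)"
        using J by (intro prod.cong) auto
      then show "(\<Prod>i\<in>insert j J. g ((x(j := y)) i) ((x(j := y)) j)) = g y y * (\<Prod>i\<in>J. g (x i) y)"
        using J by simp
    qed
    also have "\<dots> = g y y * (\<integral>\<^sup>+\<omega>. (\<Prod>i\<in>J. g (\<omega> i) y) \<partial>PiM J (\<lambda>_. M))"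
      using g_section[OF y, measurable] by (intro nn_integral_cmult) measurable
    also have "(\<integral>\<^sup>+\<omega>. (\<Prod>i\<in>J. g (\<omega> i) y) \<partial>PiM J (\<lambda>_. M)) = (\<Prod>i\<in>J. \<integral>\<^sup>+x. g x y \<partial>M)"
      using g_section[OF y] by (intro product_nn_integral_prod J(1))
    finally show "(\<integral>\<^sup>+x. (\<Prod>i\<in>insert j J. g ((x(j := y)) i) ((x(j := y)) j)) \<partial>PiM J (\<lambda>_. M))
        = g y y * (\<integral>\<^sup>+x. g x y \<partial>M) ^ card J"
      by simp
  qed
  also have "\<dots> \<le> (\<integral>\<^sup>+y. g y y * K ^ card J \<partial>M)"
    using bound by (intro nn_integral_mono_AE) (auto elim!: eventually_mono intro!: mult_left_mono power_mono)
  also have "\<dots> = (\<integral>\<^sup>+y. g y y \<partial>M) * K ^ (card I - 1)"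
    by (simp add: nn_integral_multc J(4))
  finally show ?thesis .
qed

lemma coupling_density_AE_nn_integral_eq_1:
  fixes f :: "'a \<times> 'b \<Rightarrow> ennreal"
  assumes "prob_space \<alpha>" "prob_space \<beta>" and "coupling \<alpha> \<beta> \<pi>"
    and [measurable]: "f \<in> borel_measurable (\<alpha> \<Otimes>\<^sub>M \<beta>)"
    and \<pi>: "\<pi> = density (\<alpha> \<Otimes>\<^sub>M \<beta>) f"
  shows "AE y in \<beta>. (\<integral>\<^sup>+x. f (x, y) \<partial>\<alpha>) = 1"
proof -
  interpret pair_prob_space \<alpha> \<beta>
    using assms by (simp add: pair_prob_space_def pair_sigma_finite_def prob_space_imp_sigma_finite)
  have "(\<integral>\<^sup>+y\<in>A. (\<integral>\<^sup>+x. f (x, y) \<partial>\<alpha>) \<partial>\<beta>) = (\<integral>\<^sup>+y\<in>A. 1 \<partial>\<beta>)" if A [measurable]: "A \<in> sets \<beta>" for A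
  proof -
    have "(\<integral>\<^sup>+y\<in>A. (\<integral>\<^sup>+x. f (x, y) \<partial>\<alpha>) \<partial>\<beta>)
        = (\<integral>\<^sup>+y. (\<integral>\<^sup>+x. f (x, y) * indicator (space \<alpha> \<times> A) (x, y) \<partial>\<alpha>) \<partial>\<beta>)"
      by (intro nn_integral_cong, subst nn_integral_multc[symmetric])
        (auto intro!: nn_integral_cong simp: indicator_def)
    also have "\<dots> = (\<integral>\<^sup>+z. f z * indicator (space \<alpha> \<times> A) z \<partial>(\<alpha> \<Otimes>\<^sub>M \<beta>))"
      by (rule nn_integral_snd) measurable
    also have "\<dots> = emeasure \<pi> (space \<alpha> \<times> A)"
      by (simp add: \<pi> emeasure_density)
    also have "\<dots> = emeasure (distr \<pi> \<beta> snd) A"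
    proof -
      have "snd -` A \<inter> space \<pi> = space \<alpha> \<times> A"
        using sets.sets_into_space[OF A] by (auto simp: \<pi> space_pair_measure)
      then show ?thesis
        by (subst emeasure_distr) (auto simp: \<pi>)
    qed
    also have "\<dots> = (\<integral>\<^sup>+y\<in>A. 1 \<partial>\<beta>)"
      using \<open>coupling \<alpha> \<beta> \<pi>\<close> by (simp add: coupling_def)
    finally show ?thesis .
  qed
  then show ?thesis
    by (intro M2.density_unique2) measurable
qed

definition column_deviation :: "('a \<Rightarrow> 'b \<Rightarrow> real) \<Rightarrow> nat \<Rightarrow> (nat \<Rightarrow> 'a \<times> 'b) \<Rightarrow> nat \<Rightarrow> real" where
  "column_deviation p n \<omega> j = (\<Sum>i<n. 1 - p (fst (\<omega> i)) (snd (\<omega> j))) / sqrt n"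

lemma marg_stat_eq_column_deviation:
  assumes "n > 0"
  shows "real n * marg_stat p n \<omega> = (\<Sum>j<n. (column_deviation p n \<omega> j)\<^sup>2) / n"
proof -
  have "real n * (1 / real n * (1 - 1 / real n * (\<Sum>i<n. p (fst (\<omega> i)) (snd (\<omega> j))))\<^sup>2)
      = (column_deviation p n \<omega> j)\<^sup>2 / n" for j
    using assms by (simp add: column_deviation_def sum_subtractf power_divide power2_eq_square field_simps)
  then show ?thesis
    using assms by (simp add: marg_stat_def sum_distrib_left sum_divide_distrib)
qed

lemma marg_stat_nonneg: "0 \<le> marg_stat p n \<omega>"
  by (simp add: marg_stat_def sum_nonneg)

locale bounded_density_sampling =
  fixes \<alpha> :: "'a measure" and \<beta> :: "'b measure" and \<pi>' :: "('a \<times> 'b) measure"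
    and p :: "'a \<Rightarrow> 'b \<Rightarrow> real" and b :: real
  assumes prob_space_\<alpha>: "prob_space \<alpha>" and prob_space_\<beta>: "prob_space \<beta>"
    and coupling: "coupling \<alpha> \<beta> \<pi>'"
    and p_measurable: "(\<lambda>z. p (fst z) (snd z)) \<in> borel_measurable (\<alpha> \<Otimes>\<^sub>M \<beta>)"
    and p_nonneg: "\<And>x y. 0 \<le> p x y" and p_le: "\<And>x y. p x y \<le> b"
    and p_normalised: "AE y in \<beta>. (\<integral>\<^sup>+x. p x y \<partial>\<alpha>) = 1"
begin

sublocale \<pi>': prob_space \<pi>'
  using coupling by (simp add: coupling_def)

lemma measurable_fst_\<pi>' [measurable]: "fst \<in> \<pi>' \<rightarrow>\<^sub>M \<alpha>"
  and measurable_snd_\<pi>' [measurable]: "snd \<in> \<pi>' \<rightarrow>\<^sub>M \<beta>"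
  using coupling measurable_cong_sets[of "\<pi>'" "\<alpha> \<Otimes>\<^sub>M \<beta>"] by (auto simp: coupling_def)

lemma distr_fst_\<pi>': "distr \<pi>' \<alpha> fst = \<alpha>"
  and distr_snd_\<pi>': "distr \<pi>' \<beta> snd = \<beta>"
  using coupling by (auto simp: coupling_def)

lemma measurable_p [measurable (raw)]:
  "f \<in> M \<rightarrow>\<^sub>M \<alpha> \<Longrightarrow> g \<in> M \<rightarrow>\<^sub>M \<beta> \<Longrightarrow> (\<lambda>x. p (f x) (g x)) \<in> borel_measurable M"
  using measurable_compose[OF measurable_Pair p_measurable] by simp

lemma one_le_b: "1 \<le> b"
proof -
  have "\<exists>y. (\<integral>\<^sup>+x. p x y \<partial>\<alpha>) = 1"
  proof (rule ccontr)
    assume "\<nexists>y. (\<integral>\<^sup>+x. p x y \<partial>\<alpha>) = 1"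
    then have "AE y in \<beta>. False"
      using p_normalised by (auto elim: eventually_mono)
    then show False
      using prob_space.AE_False[OF prob_space_\<beta>] by simp
  qed
  then obtain y where "ennreal 1 = (\<integral>\<^sup>+x. p x y \<partial>\<alpha>)"
    by auto
  also have "\<dots> \<le> (\<integral>\<^sup>+x. b \<partial>\<alpha>)"
    by (intro nn_integral_mono ennreal_leI p_le)
  also have "\<dots> = ennreal b"
    using prob_space.emeasure_space_1[OF prob_space_\<alpha>] by simp
  finally show ?thesis
    using p_nonneg p_le order_trans by (auto simp: ennreal_le_iff)
qed

lemma abs_one_minus_p_le: "\<bar>1 - p x y\<bar> \<le> b"
  using p_nonneg[of x y] p_le[of x y] one_le_b by linarith

lemma AE_nn_integral_exp_one_minus_p_le:
  "AE z in \<pi>'. (\<integral>\<^sup>+z'. exp (c * (1 - p (fst z') (snd z))) \<partial>\<pi>') \<le> ennreal (exp (c\<^sup>2 * b\<^sup>2 / 8))"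
proof -
  have Hoeffding: "(\<integral>\<^sup>+x. exp (c * (1 - p x y)) \<partial>\<alpha>) \<le> ennreal (exp (c\<^sup>2 * b\<^sup>2 / 8))"
    if y: "y \<in> space \<beta>" and normalised: "(\<integral>\<^sup>+x. p x y \<partial>\<alpha>) = 1" for y
  proof -
    interpret interval_bounded_random_variable \<alpha> "\<lambda>x. 1 - p x y" "1 - b" 1
    proof (intro interval_bounded_random_variable.intro prob_space_\<alpha> interval_bounded_random_variable_axioms.intro)
      show "(\<lambda>x. 1 - p x y) \<in> borel_measurable \<alpha>"
        using y by measurable
      show "AE x in \<alpha>. 1 - p x y \<in> {1 - b..1}"
        using p_nonneg p_le by (intro AE_I2) (simp add: algebra_simps)
    qed
    have "(\<integral>x. p x y \<partial>\<alpha>) = 1"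
      using normalised y p_nonneg by (subst integral_eq_nn_integral) auto
    moreover have "integrable \<alpha> (\<lambda>x. p x y)"
      using y p_nonneg p_le by (intro integrable_const_bound[where B = b]) auto
    ultimately have "(\<integral>x. 1 - p x y \<partial>\<alpha>) = 0"
      by (subst Bochner_Integration.integral_diff) (auto simp: prob_space)
    from Hoeffdings_lemma_nn_integral_0_any_sign[OF this, of c] show ?thesis
      by simp
  qed
  have "AE y in \<beta>. (\<integral>\<^sup>+x. exp (c * (1 - p x y)) \<partial>\<alpha>) \<le> ennreal (exp (c\<^sup>2 * b\<^sup>2 / 8))"
    using p_normalised AE_space by eventually_elim (rule Hoeffding)
  then have "AE y in distr \<pi>' \<beta> snd. (\<integral>\<^sup>+x. exp (c * (1 - p x y)) \<partial>distr \<pi>' \<alpha> fst) \<le> ennreal (exp (c\<^sup>2 * b\<^sup>2 / 8))"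
    unfolding distr_fst_\<pi>' distr_snd_\<pi>' .
  then have "AE z in \<pi>'. (\<integral>\<^sup>+x. exp (c * (1 - p x (snd z))) \<partial>distr \<pi>' \<alpha> fst) \<le> ennreal (exp (c\<^sup>2 * b\<^sup>2 / 8))"
    by (rule AE_distrD[OF measurable_snd_\<pi>'])
  then show ?thesis
    using AE_space
  proof eventually_elim
    case (elim z)
    have "snd z \<in> space \<beta>"
      using elim(2) measurable_space[OF measurable_snd_\<pi>'] by blast
    then show ?case
      using elim(1) by (subst (asm) nn_integral_distr) auto
  qed
qed

abbreviation sample :: "nat \<Rightarrow> (nat \<Rightarrow> 'a \<times> 'b) measure" where
  "sample n \<equiv> PiM {..<n} (\<lambda>_. \<pi>')"

lemma prob_space_sample: "prob_space (sample n)"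
  by (simp add: \<pi>'.prob_space_axioms prob_space_PiM)

lemma measurable_column_deviation:
  "j < n \<Longrightarrow> (\<lambda>\<omega>. column_deviation p n \<omega> j) \<in> borel_measurable (sample n)"
  unfolding column_deviation_def by measurable

lemma abs_column_deviation_le: "\<bar>column_deviation p n \<omega> j\<bar> \<le> sqrt n * b"
proof -
  have "\<bar>\<Sum>i<n. 1 - p (fst (\<omega> i)) (snd (\<omega> j))\<bar> \<le> (\<Sum>i<n. \<bar>1 - p (fst (\<omega> i)) (snd (\<omega> j))\<bar>)"
    by (rule sum_abs)
  also have "\<dots> \<le> (\<Sum>i<n. b)"
    by (intro sum_mono abs_one_minus_p_le)
  finally show ?thesis
    by (cases "n = 0") (auto simp: column_deviation_def divide_le_eq real_sqrt_mult_self algebra_simps)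
qed

lemma nn_integral_exp_column_deviation_le:
  fixes s :: real
  assumes "j < n"
  defines "c \<equiv> s / sqrt n"
  shows "(\<integral>\<^sup>+\<omega>. exp (s * column_deviation p n \<omega> j) \<partial>sample n)
    \<le> (\<integral>\<^sup>+z. exp (c * (1 - p (fst z) (snd z))) \<partial>\<pi>') * ennreal (exp (c\<^sup>2 * b\<^sup>2 / 8)) ^ (n - 1)"
proof -
  have "s * column_deviation p n \<omega> j = (\<Sum>i<n. c * (1 - p (fst (\<omega> i)) (snd (\<omega> j))))" for \<omega>
    by (simp add: column_deviation_def c_def sum_distrib_left sum_divide_distrib)
  then have "ennreal (exp (s * column_deviation p n \<omega> j))
      = (\<Prod>i<n. ennreal (exp (c * (1 - p (fst (\<omega> i)) (snd (\<omega> j))))))" for \<omega>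
    by (simp add: exp_sum prod_ennreal)
  then have "(\<integral>\<^sup>+\<omega>. exp (s * column_deviation p n \<omega> j) \<partial>sample n)
      = (\<integral>\<^sup>+\<omega>. (\<Prod>i<n. ennreal (exp (c * (1 - p (fst (\<omega> i)) (snd (\<omega> j)))))) \<partial>sample n)"
    by simp
  also have "\<dots> \<le> (\<integral>\<^sup>+z. exp (c * (1 - p (fst z) (snd z))) \<partial>\<pi>') * ennreal (exp (c\<^sup>2 * b\<^sup>2 / 8)) ^ (card {..<n} - 1)"
    using assms(1) AE_nn_integral_exp_one_minus_p_le
    by (intro nn_integral_PiM_prod_diagonal_le prob_space_imp_sigma_finite \<pi>'.prob_space_axioms) auto
  finally show ?thesis
    by simp
qed

lemma integrable_cosh_column_deviation:
  assumes "j < n"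
  shows "integrable (sample n) (\<lambda>\<omega>. cosh (\<theta> * column_deviation p n \<omega> j))"
proof -
  interpret prob_space "sample n"
    by (rule prob_space_sample)
  show ?thesis
  proof (rule integrable_const_bound[where B = "cosh (\<theta> * (sqrt n * b))"])
    show "AE \<omega> in sample n. norm (cosh (\<theta> * column_deviation p n \<omega> j)) \<le> cosh (\<theta> * (sqrt n * b))"
      using abs_column_deviation_le one_le_b
      by (intro AE_I2) (auto intro!: cosh_abs_mono mult_left_mono simp: abs_mult)
    show "(\<lambda>\<omega>. cosh (\<theta> * column_deviation p n \<omega> j)) \<in> borel_measurable (sample n)"
      using measurable_column_deviation[OF assms] by measurable
  qed
qed

(* The diagonal summand i = j is not centred, so Hoeffding's lemma does not apply to it; it is
   controlled only after symmetrising exp into cosh, using |1 - p| <= b. *)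
lemma nn_integral_two_cosh_column_deviation_le:
  fixes \<theta> :: real
  assumes "j < n"
  defines "c \<equiv> \<theta> / sqrt n"
  shows "(\<integral>\<^sup>+\<omega>. 2 * cosh (\<theta> * column_deviation p n \<omega> j) \<partial>sample n)
    \<le> ennreal (2 * cosh (c * b) * exp (c\<^sup>2 * b\<^sup>2 / 8) ^ (n - 1))"
proof -
  define K where "K = ennreal (exp (c\<^sup>2 * b\<^sup>2 / 8)) ^ (n - 1)"
  note measurable_column_deviation[OF assms(1), measurable]
  have "(\<integral>\<^sup>+\<omega>. 2 * cosh (\<theta> * column_deviation p n \<omega> j) \<partial>sample n)
      = (\<integral>\<^sup>+\<omega>. exp (\<theta> * column_deviation p n \<omega> j) \<partial>sample n)
        + (\<integral>\<^sup>+\<omega>. exp ((- \<theta>) * column_deviation p n \<omega> j) \<partial>sample n)"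
    by (simp add: ennreal_two_cosh nn_integral_add)
  also have "\<dots> \<le> (\<integral>\<^sup>+z. exp (c * (1 - p (fst z) (snd z))) \<partial>\<pi>') * K
      + (\<integral>\<^sup>+z. exp (- c * (1 - p (fst z) (snd z))) \<partial>\<pi>') * K"
    using nn_integral_exp_column_deviation_le[OF assms(1), of \<theta>]
      nn_integral_exp_column_deviation_le[OF assms(1), of "- \<theta>"]
    by (intro add_mono) (simp_all add: c_def K_def)
  also have "\<dots> = (\<integral>\<^sup>+z. 2 * cosh (c * (1 - p (fst z) (snd z))) \<partial>\<pi>') * K"
    by (simp add: ennreal_two_cosh nn_integral_add distrib_right)
  also have "\<dots> \<le> (\<integral>\<^sup>+z. 2 * cosh (c * b) \<partial>\<pi>') * K"
    using abs_one_minus_p_le one_le_b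
    by (intro mult_right_mono nn_integral_mono ennreal_leI)
      (auto intro!: cosh_abs_mono mult_left_mono simp: abs_mult)
  also have "\<dots> = ennreal (2 * cosh (c * b) * exp (c\<^sup>2 * b\<^sup>2 / 8) ^ (n - 1))"
    by (simp add: K_def \<pi>'.emeasure_space_1 ennreal_mult ennreal_power)
  finally show ?thesis .
qed

lemma integral_cosh_column_deviation_le:
  assumes "j < n"
  shows "(\<integral>\<omega>. cosh (\<theta> * column_deviation p n \<omega> j) \<partial>sample n) \<le> exp (\<theta>\<^sup>2 * b\<^sup>2 / 2)"
proof -
  define c where "c = \<theta> / sqrt n"
  have "(\<integral>\<omega>. 2 * cosh (\<theta> * column_deviation p n \<omega> j) \<partial>sample n)
      \<le> 2 * cosh (c * b) * exp (c\<^sup>2 * b\<^sup>2 / 8) ^ (n - 1)"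
    using nn_integral_two_cosh_column_deviation_le[OF assms, of \<theta>] measurable_column_deviation[OF assms]
    by (subst integral_eq_nn_integral) (auto intro: enn2real_leI simp: c_def)
  then have "(\<integral>\<omega>. cosh (\<theta> * column_deviation p n \<omega> j) \<partial>sample n)
      \<le> cosh (c * b) * exp (c\<^sup>2 * b\<^sup>2 / 8) ^ (n - 1)"
    by simp
  also have "\<dots> \<le> exp ((c * b)\<^sup>2 / 2) * exp (c\<^sup>2 * b\<^sup>2 / 8) ^ (n - 1)"
    by (intro mult_right_mono cosh_le_exp_half_square) simp
  also have "\<dots> = exp (\<theta>\<^sup>2 * b\<^sup>2 / (2 * real n)) * exp (\<theta>\<^sup>2 * b\<^sup>2 / (8 * real n)) ^ (n - 1)"
    using assms by (simp add: c_def power_divide power_mult_distrib ac_simps)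
  also have "\<dots> \<le> exp (\<theta>\<^sup>2 * b\<^sup>2 / 2)"
    using assms by (intro exp_half_mult_exp_eighth_power_le) auto
  finally show ?thesis .
qed

lemma cosh_sqrt_marg_stat_le_mean:
  assumes "n > 0"
  shows "cosh (\<theta> * sqrt (n * marg_stat p n \<omega>)) \<le> (\<Sum>j<n. cosh (\<theta> * column_deviation p n \<omega> j)) / n"
proof -
  have "cosh (\<theta> * sqrt (\<Sum>j<n. (1 / n) *\<^sub>R (column_deviation p n \<omega> j)\<^sup>2))
      \<le> (\<Sum>j<n. 1 / n * cosh (\<theta> * sqrt ((column_deviation p n \<omega> j)\<^sup>2)))"
    using assms by (intro convex_on_sum[OF _ _ convex_on_cosh_sqrt]) auto
  moreover have "cosh (\<theta> * \<bar>v\<bar>) = cosh (\<theta> * v)" for v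
    by (metis abs_mult abs_abs cosh_real_abs)
  ultimately show ?thesis
    using assms
    by (simp add: marg_stat_eq_column_deviation sum_divide_distrib[symmetric] sum_distrib_left[symmetric])
qed

lemma measurable_marg_stat: "marg_stat p n \<in> borel_measurable (sample n)"
  unfolding marg_stat_def by measurable

lemma integral_cosh_sqrt_marg_stat_le:
  assumes "n > 0"
  shows "integrable (sample n) (\<lambda>\<omega>. cosh (\<theta> * sqrt (n * marg_stat p n \<omega>)))"
    and "(\<integral>\<omega>. cosh (\<theta> * sqrt (n * marg_stat p n \<omega>)) \<partial>sample n) \<le> exp (\<theta>\<^sup>2 * b\<^sup>2 / 2)"
proof -
  define R where "R \<omega> = (\<Sum>j<n. cosh (\<theta> * column_deviation p n \<omega> j)) / n" for \<omega>
  have R: "integrable (sample n) R"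
    unfolding R_def
    by (intro integrable_divide_zero Bochner_Integration.integrable_sum integrable_cosh_column_deviation) auto
  show integrable: "integrable (sample n) (\<lambda>\<omega>. cosh (\<theta> * sqrt (n * marg_stat p n \<omega>)))"
  proof (rule Bochner_Integration.integrable_bound[OF R])
    show "(\<lambda>\<omega>. cosh (\<theta> * sqrt (n * marg_stat p n \<omega>))) \<in> borel_measurable (sample n)"
      using measurable_marg_stat by measurable
    show "AE \<omega> in sample n. norm (cosh (\<theta> * sqrt (n * marg_stat p n \<omega>))) \<le> norm (R \<omega>)"
      using cosh_sqrt_marg_stat_le_mean[OF assms] by (intro AE_I2) (simp add: R_def sum_nonneg)
  qed
  have "(\<integral>\<omega>. cosh (\<theta> * sqrt (n * marg_stat p n \<omega>)) \<partial>sample n) \<le> (\<integral>\<omega>. R \<omega> \<partial>sample n)"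
    using cosh_sqrt_marg_stat_le_mean[OF assms] by (intro integral_mono[OF integrable R]) (simp add: R_def)
  also have "\<dots> = (\<Sum>j<n. \<integral>\<omega>. cosh (\<theta> * column_deviation p n \<omega> j) \<partial>sample n) / n"
    unfolding R_def by (simp add: integrable_cosh_column_deviation)
  also have "\<dots> \<le> (\<Sum>j<n. exp (\<theta>\<^sup>2 * b\<^sup>2 / 2)) / n"
    by (intro divide_right_mono sum_mono integral_cosh_column_deviation_le) auto
  also have "\<dots> = exp (\<theta>\<^sup>2 * b\<^sup>2 / 2)"
    using assms by simp
  finally show "(\<integral>\<omega>. cosh (\<theta> * sqrt (n * marg_stat p n \<omega>)) \<partial>sample n) \<le> exp (\<theta>\<^sup>2 * b\<^sup>2 / 2)" .
qed

lemma sqrt_marg_stat_cosh_bound: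
  assumes "n > 0"
  defines "Y \<equiv> \<lambda>\<omega>. sqrt (n * marg_stat p n \<omega>)"
  shows "Y \<in> borel_measurable (sample n)"
    and "(Y \<omega>)\<^sup>2 = n * marg_stat p n \<omega>"
    and "integrable (sample n) (\<lambda>\<omega>. cosh (\<theta> * Y \<omega>))"
    and "(\<integral>\<omega>. cosh (\<theta> * Y \<omega>) \<partial>sample n) \<le> exp (\<theta>\<^sup>2 * b\<^sup>2 / 2)"
  using assms integral_cosh_sqrt_marg_stat_le[OF assms(1)] measurable_marg_stat marg_stat_nonneg[of p n \<omega>]
  by (simp_all add: Y_def)

lemma integral_marg_stat_le:
  assumes "n > 0"
  shows "(\<integral>\<omega>. marg_stat p n \<omega> \<partial>sample n) \<le> b * (b + 1) / n"
proof -
  interpret sample: prob_space "sample n"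
    by (rule prob_space_sample)
  note Y = sqrt_marg_stat_cosh_bound[OF assms]
  have "n * (\<integral>\<omega>. marg_stat p n \<omega> \<partial>sample n) \<le> b * (b + 1)"
    using sample.integral_square_le_of_cosh_bound[OF Y(1) _ Y(3,4)] one_le_b by (simp add: Y(2))
  with assms show ?thesis
    by (simp add: le_divide_eq mult.commute)
qed

lemma prob_marg_stat_le_ge:
  assumes "n > 0" "t > 0"
  shows "measure (sample n) {\<omega> \<in> space (sample n). marg_stat p n \<omega> \<le> (t + b + 1)\<^sup>2 / n}
    \<ge> 1 - exp (- t\<^sup>2 / (4 * b\<^sup>2))"
proof -
  interpret sample: prob_space "sample n"
    by (rule prob_space_sample)
  note Y = sqrt_marg_stat_cosh_bound[OF assms(1)]
  let ?Y = "\<lambda>\<omega>. sqrt (n * marg_stat p n \<omega>)"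
  let ?bad = "{\<omega> \<in> space (sample n). (t + b + 1)\<^sup>2 \<le> (?Y \<omega>)\<^sup>2}"
  have "?bad \<in> sets (sample n)"
    using Y(1) by measurable
  have "space (sample n) - ?bad \<subseteq> {\<omega> \<in> space (sample n). marg_stat p n \<omega> \<le> (t + b + 1)\<^sup>2 / n}"
    using assms by (auto simp: Y(2) le_divide_eq mult.commute)
  then have "1 - measure (sample n) ?bad
      \<le> measure (sample n) {\<omega> \<in> space (sample n). marg_stat p n \<omega> \<le> (t + b + 1)\<^sup>2 / n}"
    using measurable_marg_stat
    by (subst sample.prob_compl[OF \<open>?bad \<in> sets (sample n)\<close>, symmetric])
      (intro sample.finite_measure_mono; measurable)
  moreover have "measure (sample n) ?bad \<le> exp (- t\<^sup>2 / (4 * b\<^sup>2))"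
    using sample.prob_square_ge_le_of_cosh_bound[OF Y(1) one_le_b assms(2) Y(3,4)] .
  ultimately show ?thesis
    by linarith
qed

end

theorem proposition8:
  fixes \<alpha> :: "'a measure" and \<beta> :: "'b measure" and \<pi> \<pi>' :: "('a \<times> 'b) measure"
    and p :: "'a \<Rightarrow> 'b \<Rightarrow> real" and b :: real and n :: nat
  assumes "prob_space \<alpha>" and "prob_space \<beta>"
    and "coupling \<alpha> \<beta> \<pi>"
    and p_meas: "(\<lambda>z. p (fst z) (snd z)) \<in> borel_measurable (\<alpha> \<Otimes>\<^sub>M \<beta>)"
    and p_nonneg: "\<And>x y. 0 \<le> p x y"
    and p_bound: "\<And>x y. p x y \<le> b"
    and dens: "\<pi> = density (\<alpha> \<Otimes>\<^sub>M \<beta>) (\<lambda>z. ennreal (p (fst z) (snd z)))"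
    and "coupling \<alpha> \<beta> \<pi>'"
    and "n > 0"
  shows "(\<integral>\<omega>. marg_stat p n \<omega> \<partial>(\<Pi>\<^sub>M i\<in>{..<n}. \<pi>')) \<le> (b + 1)\<^sup>2 / real n
    \<and> (\<forall>t>0.
      measure (\<Pi>\<^sub>M i\<in>{..<n}. \<pi>')
        {\<omega> \<in> space (\<Pi>\<^sub>M i\<in>{..<n}. \<pi>'). marg_stat p n \<omega> \<le> (t + b + 1)\<^sup>2 / real n}
      \<ge> 1 - exp (- t\<^sup>2 / (4 * b\<^sup>2)))"
proof -
  have "AE y in \<beta>. (\<integral>\<^sup>+x. p x y \<partial>\<alpha>) = 1"
    using coupling_density_AE_nn_integral_eq_1[OF assms(1-3) _ dens] p_meas by simp
  then interpret bounded_density_sampling \<alpha> \<beta> \<pi>' p b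
    using assms(1,2,4-6,8) by (simp add: bounded_density_sampling_def)
  have "b * (b + 1) / n \<le> (b + 1)\<^sup>2 / n"
    using one_le_b by (intro divide_right_mono) (auto simp: power2_eq_square)
  then show ?thesis
    using integral_marg_stat_le[OF \<open>n > 0\<close>] prob_marg_stat_le_ge[OF \<open>n > 0\<close>] by auto
qed

end
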